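(* Let $r_0>0$ and $T>0$, and let $$D_T=\{(u,r,s,\phi):\ u\ge 0,\ r\ge r_0,\ u+r\le T+r_0,\ -1\le s\le 1,\ \phi\in\mathbb{R}\}.$$ Let $R,P,Q$ be real-valued functions that are $C^1$ on $D_T$, $2\pi$-periodic in $\phi$, and satisfy at all points of $D_T$ with $|s|<1$ the system $$2R_u = R_r+\frac{\sqrt{1-s^2}}{r}P_s+\frac{1}{r\sqrt{1-s^2}}Q_\phi-\frac{sP}{r\sqrt{1-s^2}},\qquad P_r=\frac{\sqrt{1-s^2}}{r}R_s-\frac{P}{r},\qquad Q_r=\frac{1}{r\sqrt{1-s^2}}R_\phi-\frac{Q}{r}.$$ (The values $R|_{u=0}=f(r,s,\phi)$, $r_0\le r\le T+r_0$, and $P|_{r=r_0}=g(u,s,\phi)$, $Q|_{r=r_0}=h(u,s,\phi)$, $0\le u\le T$, are the free data of this characteristic problem.) Then, with $v=(R,P,Q)$, $$\|v\|_T^2\le 2\left(\int_{\Sigma_u}R^2\,d\Sigma_u+\int_{\Sigma_r}\left(P^2+Q^2\right)d\Sigma_r\right).$$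
   Context: Coordinates: $(r,\theta,\phi)$ are spherical spatial coordinates of Minkowski space, $s=\cos\theta$, and $u=t-r$; subscripts denote partial derivatives. The system is the first-order reduction of the wave equation for $g=r\psi$ via $R=g_r$, $P=g_s\sqrt{1-s^2}/r$, $Q=g_\phi/(r\sqrt{1-s^2})$, but the claim concerns arbitrary solutions $(R,P,Q)$ as specified. Surfaces and measures: $\Sigma_u=\{u=0,\ r_0\le r\le T+r_0\}$ (a null cone) with $d\Sigma_u=dr\,ds\,d\phi$; $\Sigma_r=\{r=r_0,\ 0\le u\le T\}$ (a timelike worldtube) with $d\Sigma_r=du\,ds\,d\phi$; in both, $s\in[-1,1]$ and $\phi\in[0,2\pi]$. The norm on $\Sigma_T=\{u+r=T+r_0\}$ is $$\|v\|_T^2=\int_{r_0}^{T+r_0}\!\!\int_{-1}^{1}\!\!\int_0^{2\pi}\big(R^2+P^2+Q^2\big)(T+r_0-r,r,s,\phi)\,d\phi\,ds\,dr .$$ *)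

theory Defs
  imports "HOL-Analysis.Analysis"
begin

type_synonym pt4 = "real \<times> real \<times> real \<times> real"  (* (u, r, s, phi) *)

definition D_T :: "real \<Rightarrow> real \<Rightarrow> pt4 set" where
  "D_T r0 T = {(u, r, s, \<phi>). 0 \<le> u \<and> r0 \<le> r \<and> u + r \<le> T + r0 \<and> -1 \<le> s \<and> s \<le> 1}"

definition C1_with :: "pt4 set \<Rightarrow> (pt4 \<Rightarrow> real) \<Rightarrow> (pt4 \<Rightarrow> (pt4 \<Rightarrow>\<^sub>L real)) \<Rightarrow> bool" where
  "C1_with D F F' \<longleftrightarrow> continuous_on D F' \<and>
     (\<forall>x\<in>D. (F has_derivative blinfun_apply (F' x)) (at x within D))"

definition d_u :: "(pt4 \<Rightarrow>\<^sub>L real) \<Rightarrow> real" where "d_u L = blinfun_apply L (1, 0, 0, 0)"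
definition d_r :: "(pt4 \<Rightarrow>\<^sub>L real) \<Rightarrow> real" where "d_r L = blinfun_apply L (0, 1, 0, 0)"
definition d_s :: "(pt4 \<Rightarrow>\<^sub>L real) \<Rightarrow> real" where "d_s L = blinfun_apply L (0, 0, 1, 0)"
definition d_phi :: "(pt4 \<Rightarrow>\<^sub>L real) \<Rightarrow> real" where "d_phi L = blinfun_apply L (0, 0, 0, 1)"

end

theory Submission
  imports Defs
begin

text \<open>
  Multiplying the three equations by \<open>R\<close>, \<open>P\<close>, \<open>Q\<close> gives the local energy identity
  \<open>\<partial>\<^sub>u(R\<^sup>2) + \<partial>\<^sub>r(P\<^sup>2 + Q\<^sup>2 - R\<^sup>2)/2 + (P\<^sup>2 + Q\<^sup>2)/r = div(R P, R Q)/r\<close>, where the right-hand side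
  is a divergence on the unit sphere in the coordinates \<open>(s, \<phi>)\<close>. Its angular integral vanishes, by
  periodicity in \<open>\<phi>\<close> and because the weight \<open>sqrt (1 - s\<^sup>2)\<close> vanishes at the poles, so the
  \<open>(u, r)\<close>-divergence of the energy current has nonpositive angular integral. Integrating it over the
  truncated cone \<open>u \<ge> 0, r \<ge> r0, u + r \<le> T + r0\<close> bounds the energy on the slice \<open>u + r = T + r0\<close> by
  twice the \<open>R\<^sup>2\<close>-flux through the initial cone plus the \<open>P\<^sup>2 + Q\<^sup>2 - R\<^sup>2\<close>-flux through the worldtube.
  The divergence theorem on the cone is obtained by differentiating in \<open>\<tau>\<close> the energy of the slices
  \<open>u + r = \<tau> + r0\<close>, each parametrised over the same box.
\<close>

lemma mem_D_T [simp]: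
  "(u, r, s, \<phi>) \<in> D_T r0 T \<longleftrightarrow> 0 \<le> u \<and> r0 \<le> r \<and> u + r \<le> T + r0 \<and> -1 \<le> s \<and> s \<le> 1"
  by (simp add: D_T_def)

abbreviation angle_box :: "(real \<times> real) set" where
  "angle_box \<equiv> cbox (-1, 0) (1, 2 * pi)"

abbreviation cone_box :: "(real \<times> real \<times> real) set" where
  "cone_box \<equiv> cbox (0, -1, 0) (1, 1, 2 * pi)"

lemma angle_box_eq: "angle_box = {-1..1} \<times> {0..2*pi}"
  unfolding cbox_Pair_eq by (simp add: cbox_interval)

lemma cone_box_eq: "cone_box = {0..1} \<times> {-1..1} \<times> {0..2*pi}"
  unfolding cbox_Pair_eq by (simp add: cbox_interval)

lemma integral_cbox_Pair_continuous:
  fixes f :: "real \<Rightarrow> 'b::euclidean_space \<Rightarrow> real"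
  assumes "continuous_on ({a..b} \<times> cbox c d) (\<lambda>(x, y). f x y)"
  shows "integral (cbox (a, c) (b, d)) (\<lambda>(x, y). f x y) = integral {a..b} (\<lambda>x. integral (cbox c d) (f x))"
  using integral_prod_continuous[of a c b d "\<lambda>(x, y). f x y"] assms
  by (simp add: cbox_Pair_eq cbox_interval)

lemma blinfun_apply_u_r_direction: "blinfun_apply L (a, b, 0, 0) = a * d_u L + b * d_r L"
proof -
  have "(a, b, 0::real, 0::real) = a *\<^sub>R (1, 0, 0, 0) + b *\<^sub>R (0, 1, 0, 0)"
    by simp
  then show ?thesis
    by (metis blinfun.add_right blinfun.scaleR_right d_r_def d_u_def real_scaleR_def)
qed

lemma continuous_on_compose_C1_with:
  assumes "C1_with D F F'" "continuous_on S \<gamma>" "\<gamma> ` S \<subseteq> D"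
  shows "continuous_on S (\<lambda>x. F (\<gamma> x))"
proof -
  have "continuous_on D F"
    using assms(1) unfolding C1_with_def
    by (meson continuous_on_eq_continuous_within has_derivative_continuous)
  then show ?thesis
    using assms(2,3) by (rule continuous_on_compose2)
qed

lemma continuous_on_compose_C1_with_partials:
  assumes "C1_with D F F'" "continuous_on S \<gamma>" "\<gamma> ` S \<subseteq> D"
  shows "continuous_on S (\<lambda>x. d_u (F' (\<gamma> x)))" "continuous_on S (\<lambda>x. d_r (F' (\<gamma> x)))"
    "continuous_on S (\<lambda>x. d_s (F' (\<gamma> x)))" "continuous_on S (\<lambda>x. d_phi (F' (\<gamma> x)))"
proof -
  have "continuous_on D (\<lambda>q. blinfun_apply (F' q) v)" for v
    using assms(1) unfolding C1_with_def by (auto intro!: continuous_intros)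
  then have "continuous_on S (\<lambda>x. blinfun_apply (F' (\<gamma> x)) v)" for v
    using assms(2,3) by (rule continuous_on_compose2)
  then show "continuous_on S (\<lambda>x. d_u (F' (\<gamma> x)))" "continuous_on S (\<lambda>x. d_r (F' (\<gamma> x)))"
    "continuous_on S (\<lambda>x. d_s (F' (\<gamma> x)))" "continuous_on S (\<lambda>x. d_phi (F' (\<gamma> x)))"
    unfolding d_u_def d_r_def d_s_def d_phi_def by blast+
qed

lemma has_real_derivative_compose_C1_with:
  assumes "C1_with D F F'" "\<And>y. y \<in> S \<Longrightarrow> \<gamma> y \<in> D"
    and "(\<gamma> has_vector_derivative v) (at x within S)" "x \<in> S"
  shows "((\<lambda>x. F (\<gamma> x)) has_real_derivative blinfun_apply (F' (\<gamma> x)) v) (at x within S)"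
proof -
  have "((\<lambda>x. F (\<gamma> x)) has_derivative (\<lambda>h. blinfun_apply (F' (\<gamma> x)) (h *\<^sub>R v))) (at x within S)"
    apply (rule has_derivative_in_compose2[where t = D])
    using assms unfolding C1_with_def has_vector_derivative_def by auto
  moreover have "(\<lambda>h. blinfun_apply (F' (\<gamma> x)) (h *\<^sub>R v)) = (*) (blinfun_apply (F' (\<gamma> x)) v)"
    by (auto simp: blinfun.scaleR_right)
  ultimately show ?thesis
    by (simp add: has_field_derivative_def)
qed

lemma has_vector_derivative_affine: "((\<lambda>x. x *\<^sub>R v + c) has_vector_derivative v) F"
  unfolding has_vector_derivative_def by (auto intro!: derivative_eq_intros)

lemma has_vector_derivative_s_line: "((\<lambda>s. (u, r, s, \<phi>)) has_vector_derivative (0, 0, 1, 0)) F"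
proof -
  have "(\<lambda>s. (u, r, s, \<phi>)) = (\<lambda>s. s *\<^sub>R (0, 0, 1, 0) + (u, r, 0, \<phi>))"
    by auto
  then show ?thesis
    by (simp only: has_vector_derivative_affine)
qed

lemma has_vector_derivative_phi_line: "((\<lambda>\<phi>. (u, r, s, \<phi>)) has_vector_derivative (0, 0, 0, 1)) F"
proof -
  have "(\<lambda>\<phi>. (u, r, s, \<phi>)) = (\<lambda>\<phi>. \<phi> *\<^sub>R (0, 0, 0, 1) + (u, r, s, 0))"
    by auto
  then show ?thesis
    by (simp only: has_vector_derivative_affine)
qed

lemma has_real_derivative_C1_with_product_s_line:
  assumes "C1_with D F F'" "C1_with D G G'" "\<And>s. s \<in> S \<Longrightarrow> (u, r, s, \<phi>) \<in> D" "s \<in> S"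
  shows "((\<lambda>s. F (u, r, s, \<phi>) * G (u, r, s, \<phi>)) has_real_derivative
    d_s (F' (u, r, s, \<phi>)) * G (u, r, s, \<phi>) + F (u, r, s, \<phi>) * d_s (G' (u, r, s, \<phi>))) (at s within S)"
  using has_real_derivative_compose_C1_with[OF assms(1,3) has_vector_derivative_s_line assms(4)]
    has_real_derivative_compose_C1_with[OF assms(2,3) has_vector_derivative_s_line assms(4)]
  unfolding d_s_def by (auto intro!: derivative_eq_intros)

lemma has_real_derivative_C1_with_product_phi_line:
  assumes "C1_with D F F'" "C1_with D G G'" "\<And>\<phi>. \<phi> \<in> S \<Longrightarrow> (u, r, s, \<phi>) \<in> D" "\<phi> \<in> S"
  shows "((\<lambda>\<phi>. F (u, r, s, \<phi>) * G (u, r, s, \<phi>)) has_real_derivative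
    d_phi (F' (u, r, s, \<phi>)) * G (u, r, s, \<phi>) + F (u, r, s, \<phi>) * d_phi (G' (u, r, s, \<phi>))) (at \<phi> within S)"
  using has_real_derivative_compose_C1_with[OF assms(1,3) has_vector_derivative_phi_line assms(4)]
    has_real_derivative_compose_C1_with[OF assms(2,3) has_vector_derivative_phi_line assms(4)]
  unfolding d_phi_def by (auto intro!: derivative_eq_intros)

lemma has_integral_deriv_sqrt_weight_zero:
  fixes J J' m :: "real \<Rightarrow> real"
  assumes J_deriv: "\<And>s. s \<in> {-1..1} \<Longrightarrow> (J has_real_derivative J' s) (at s within {-1..1})"
    and m_eq: "\<And>s. \<bar>s\<bar> < 1 \<Longrightarrow> m s = sqrt (1 - s\<^sup>2) * J' s - s / sqrt (1 - s\<^sup>2) * J s"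
  shows "(m has_integral 0) {-1..1}"
proof -
  define w where "w s = sqrt (1 - s\<^sup>2)" for s :: real
  have "(m has_integral w 1 * J 1 - w (-1) * J (-1)) {-1..1}"
  proof (rule fundamental_theorem_of_calculus_interior)
    have "continuous_on {-1..1} J"
      using J_deriv by (meson DERIV_continuous continuous_on_eq_continuous_within)
    then show "continuous_on {-1..1} (\<lambda>s. w s * J s)"
      unfolding w_def by (intro continuous_intros)
  next
    fix s :: real assume s_open: "s \<in> {-1<..<1}"
    then have "0 < 1 - s\<^sup>2"
      by (simp add: abs_square_less_1 abs_less_iff)
    then have "(w has_real_derivative inverse (w s) / 2 * (- 2 * s)) (at s)"
      unfolding w_def by (auto intro!: derivative_eq_intros)
    moreover have "(J has_real_derivative J' s) (at s)"
      using J_deriv[of s] s_open by (simp add: at_within_Icc_at)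
    ultimately have "((\<lambda>s. w s * J s) has_real_derivative inverse (w s) / 2 * (- 2 * s) * J s + J' s * w s) (at s)"
      by (rule DERIV_mult)
    moreover have "m s = inverse (w s) / 2 * (- 2 * s) * J s + J' s * w s"
      using s_open by (simp add: m_eq abs_less_iff w_def divide_simps)
    ultimately show "((\<lambda>s. w s * J s) has_vector_derivative m s) (at s)"
      by (simp add: has_real_derivative_iff_has_vector_derivative)
  qed simp
  then show ?thesis
    by (simp add: w_def)
qed

text \<open>\<open>M\<close> is the divergence \<open>\<partial>\<^sub>s(sqrt (1 - s\<^sup>2) a) + \<partial>\<^sub>\<phi> b / sqrt (1 - s\<^sup>2)\<close> of a tangent field on the
  unit sphere in the coordinates \<open>s = cos \<theta>\<close>, \<open>\<phi>\<close>; it is prescribed only off the poles.\<close>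

lemma integral_spherical_divergence:
  fixes a a_s b b_\<phi> M :: "real \<Rightarrow> real \<Rightarrow> real"
  assumes cont_a: "continuous_on angle_box (\<lambda>(s, \<phi>). a s \<phi>)"
    and cont_a_s: "continuous_on angle_box (\<lambda>(s, \<phi>). a_s s \<phi>)"
    and cont_M: "continuous_on angle_box (\<lambda>(s, \<phi>). M s \<phi>)"
    and deriv_a: "\<And>s \<phi>. s \<in> {-1..1} \<Longrightarrow> \<phi> \<in> {0..2*pi} \<Longrightarrow>
      ((\<lambda>s. a s \<phi>) has_real_derivative a_s s \<phi>) (at s within {-1..1})"
    and deriv_b: "\<And>s \<phi>. \<bar>s\<bar> < 1 \<Longrightarrow> \<phi> \<in> {0..2*pi} \<Longrightarrow>
      (b s has_real_derivative b_\<phi> s \<phi>) (at \<phi> within {0..2*pi})"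
    and periodic_b: "\<And>s. \<bar>s\<bar> < 1 \<Longrightarrow> b s (2 * pi) = b s 0"
    and M_eq: "\<And>s \<phi>. \<bar>s\<bar> < 1 \<Longrightarrow> \<phi> \<in> {0..2*pi} \<Longrightarrow>
      M s \<phi> = sqrt (1 - s\<^sup>2) * a_s s \<phi> - s / sqrt (1 - s\<^sup>2) * a s \<phi> + b_\<phi> s \<phi> / sqrt (1 - s\<^sup>2)"
  shows "integral angle_box (\<lambda>(s, \<phi>). M s \<phi>) = 0"
proof -
  define J where "J s = integral {0..2*pi} (a s)" for s
  define J' where "J' s = integral {0..2*pi} (a_s s)" for s
  have slice_integrable: "f s integrable_on {0..2*pi}"
    if "continuous_on angle_box (\<lambda>(s, \<phi>). f s \<phi>)" "s \<in> {-1..1}" for f :: "real \<Rightarrow> real \<Rightarrow> real" and s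
    by (rule integrable_continuous_real, rule continuous_on_compose2[OF that(1), where f = "Pair s", simplified])
      (use that(2) in \<open>auto simp: angle_box_eq intro!: continuous_intros\<close>)
  have J_deriv: "(J has_real_derivative J' s) (at s within {-1..1})" if "s \<in> {-1..1}" for s
    unfolding J_def J'_def cbox_interval[symmetric]
  proof (rule leibniz_rule_field_derivative)
    show "continuous_on (cbox (-1) 1 \<times> cbox 0 (2 * pi)) (\<lambda>(s, \<phi>). a_s s \<phi>)"
      using cont_a_s by (simp only: cbox_Pair_eq)
  qed (use that deriv_a slice_integrable[OF cont_a] in \<open>auto simp: cbox_interval\<close>)
  have slices: "((\<lambda>s. integral {0..2*pi} (M s)) has_integral 0) {-1..1}"
  proof (rule has_integral_deriv_sqrt_weight_zero[OF J_deriv])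
    fix s :: real assume s: "\<bar>s\<bar> < 1"
    have "(b_\<phi> s has_integral b s (2 * pi) - b s 0) {0..2*pi}"
      using deriv_b[OF s] by (intro fundamental_theorem_of_calculus)
        (auto simp: has_real_derivative_iff_has_vector_derivative[symmetric])
    moreover have "(a s has_integral J s) {0..2*pi}" "(a_s s has_integral J' s) {0..2*pi}"
      unfolding J_def J'_def using s slice_integrable[OF cont_a] slice_integrable[OF cont_a_s]
      by (auto simp: abs_less_iff)
    ultimately have "((\<lambda>\<phi>. sqrt (1 - s\<^sup>2) * a_s s \<phi> - s / sqrt (1 - s\<^sup>2) * a s \<phi> + b_\<phi> s \<phi> / sqrt (1 - s\<^sup>2))
        has_integral sqrt (1 - s\<^sup>2) * J' s - s / sqrt (1 - s\<^sup>2) * J s + 0 / sqrt (1 - s\<^sup>2)) {0..2*pi}"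
      using periodic_b[OF s]
      by (intro has_integral_add has_integral_diff has_integral_mult_right has_integral_divide) auto
    then have "(M s has_integral sqrt (1 - s\<^sup>2) * J' s - s / sqrt (1 - s\<^sup>2) * J s) {0..2*pi}"
      by (intro has_integral_eq[of _ _ "M s", rotated]) (simp_all add: M_eq[OF s])
    then show "integral {0..2*pi} (M s) = sqrt (1 - s\<^sup>2) * J' s - s / sqrt (1 - s\<^sup>2) * J s"
      by (rule integral_unique)
  qed
  have "continuous_on ({-1..1} \<times> cbox 0 (2 * pi)) (\<lambda>(s, \<phi>). M s \<phi>)"
    using cont_M unfolding angle_box_eq by (simp add: cbox_interval)
  then have "integral angle_box (\<lambda>(s, \<phi>). M s \<phi>) = integral {-1..1} (\<lambda>s. integral (cbox 0 (2 * pi)) (M s))"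
    by (rule integral_cbox_Pair_continuous)
  then show ?thesis
    using integral_unique[OF slices] by (simp add: cbox_interval)
qed

locale C1_fields =
  fixes r0 T :: real
    and R P Q :: "pt4 \<Rightarrow> real"
    and R' P' Q' :: "pt4 \<Rightarrow> (pt4 \<Rightarrow>\<^sub>L real)"
  assumes C1R: "C1_with (D_T r0 T) R R'"
    and C1P: "C1_with (D_T r0 T) P P'"
    and C1Q: "C1_with (D_T r0 T) Q Q'"
begin

lemmas continuous_on_fields [continuous_intros] =
  continuous_on_compose_C1_with[OF C1R] continuous_on_compose_C1_with[OF C1P]
  continuous_on_compose_C1_with[OF C1Q] continuous_on_compose_C1_with_partials[OF C1R]
  continuous_on_compose_C1_with_partials[OF C1P] continuous_on_compose_C1_with_partials[OF C1Q]

definition energy :: "pt4 \<Rightarrow> real" where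
  "energy q = (R q)\<^sup>2 + (P q)\<^sup>2 + (Q q)\<^sup>2"

definition tube_flux :: "pt4 \<Rightarrow> real" where
  "tube_flux q = (P q)\<^sup>2 + (Q q)\<^sup>2 - (R q)\<^sup>2"

definition energy_deriv :: "pt4 \<Rightarrow> pt4 \<Rightarrow> real" where
  "energy_deriv q v = 2 * (R q * blinfun_apply (R' q) v + P q * blinfun_apply (P' q) v
     + Q q * blinfun_apply (Q' q) v)"

definition tube_flux_deriv :: "pt4 \<Rightarrow> pt4 \<Rightarrow> real" where
  "tube_flux_deriv q v = 2 * (P q * blinfun_apply (P' q) v + Q q * blinfun_apply (Q' q) v
     - R q * blinfun_apply (R' q) v)"

text \<open>\<open>\<partial>\<^sub>u(R\<^sup>2) + \<partial>\<^sub>r(tube_flux)/2\<close>, the \<open>(u, r)\<close>-divergence of the energy current.\<close>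

definition energy_current_div :: "pt4 \<Rightarrow> real" where
  "energy_current_div q = 2 * R q * d_u (R' q) + P q * d_r (P' q) + Q q * d_r (Q' q) - R q * d_r (R' q)"

lemma has_real_derivative_energy:
  assumes "\<And>y. y \<in> S \<Longrightarrow> \<gamma> y \<in> D_T r0 T" "(\<gamma> has_vector_derivative v) (at x within S)" "x \<in> S"
  shows "((\<lambda>x. energy (\<gamma> x)) has_real_derivative energy_deriv (\<gamma> x) v) (at x within S)"
  unfolding energy_def energy_deriv_def
  using has_real_derivative_compose_C1_with[OF C1R assms] has_real_derivative_compose_C1_with[OF C1P assms]
    has_real_derivative_compose_C1_with[OF C1Q assms]
  by (auto intro!: derivative_eq_intros simp: algebra_simps)

lemma has_real_derivative_tube_flux:
  assumes "\<And>y. y \<in> S \<Longrightarrow> \<gamma> y \<in> D_T r0 T" "(\<gamma> has_vector_derivative v) (at x within S)" "x \<in> S"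
  shows "((\<lambda>x. tube_flux (\<gamma> x)) has_real_derivative tube_flux_deriv (\<gamma> x) v) (at x within S)"
  unfolding tube_flux_def tube_flux_deriv_def
  using has_real_derivative_compose_C1_with[OF C1R assms] has_real_derivative_compose_C1_with[OF C1P assms]
    has_real_derivative_compose_C1_with[OF C1Q assms]
  by (auto intro!: derivative_eq_intros simp: algebra_simps)

text \<open>The slice \<open>u + r = \<tau> + r0\<close> of the cone, parametrised by \<open>y \<in> [0, 1]\<close> with \<open>dr = \<tau> dy\<close>:
  \<open>y = 0\<close> lies on the worldtube \<open>r = r0\<close> and \<open>y = 1\<close> on the initial cone \<open>u = 0\<close>.\<close>

definition cone_point :: "real \<Rightarrow> real \<Rightarrow> real \<Rightarrow> real \<Rightarrow> pt4" where
  "cone_point \<tau> y s \<phi> = (\<tau> * (1 - y), r0 + \<tau> * y, s, \<phi>)"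

lemma continuous_on_cone_point [continuous_intros]:
  "continuous_on S f \<Longrightarrow> continuous_on S g \<Longrightarrow> continuous_on S h \<Longrightarrow> continuous_on S k \<Longrightarrow>
    continuous_on S (\<lambda>x. cone_point (f x) (g x) (h x) (k x))"
  unfolding cone_point_def by (intro continuous_intros)

lemma cone_point_in_D_T:
  assumes "\<tau> \<in> {0..T}" "y \<in> {0..1}" "s \<in> {-1..1}"
  shows "cone_point \<tau> y s \<phi> \<in> D_T r0 T"
  using assms mult_left_le[of y \<tau>] by (auto simp: cone_point_def algebra_simps)

lemma cone_point_vector_derivative_tau:
  "((\<lambda>\<tau>. cone_point \<tau> y s \<phi>) has_vector_derivative (1 - y, y, 0, 0)) F"
proof -
  have "(\<lambda>\<tau>. cone_point \<tau> y s \<phi>) = (\<lambda>\<tau>. \<tau> *\<^sub>R (1 - y, y, 0, 0) + (0, r0, s, \<phi>))"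
    by (auto simp: cone_point_def algebra_simps)
  then show ?thesis
    by (simp only: has_vector_derivative_affine)
qed

lemma cone_point_vector_derivative_y:
  "((\<lambda>y. cone_point \<tau> y s \<phi>) has_vector_derivative (- \<tau>, \<tau>, 0, 0)) F"
proof -
  have "(\<lambda>y. cone_point \<tau> y s \<phi>) = (\<lambda>y. y *\<^sub>R (- \<tau>, \<tau>, 0, 0) + (\<tau>, r0, s, \<phi>))"
    by (auto simp: cone_point_def algebra_simps)
  then show ?thesis
    by (simp only: has_vector_derivative_affine)
qed

definition cone_density :: "real \<Rightarrow> real \<Rightarrow> real \<Rightarrow> real \<Rightarrow> real" where
  "cone_density \<tau> y s \<phi> = \<tau> * energy (cone_point \<tau> y s \<phi>)"

definition cone_density_deriv :: "real \<Rightarrow> real \<Rightarrow> real \<Rightarrow> real \<Rightarrow> real" where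
  "cone_density_deriv \<tau> y s \<phi> =
     energy (cone_point \<tau> y s \<phi>) + \<tau> * energy_deriv (cone_point \<tau> y s \<phi>) (1 - y, y, 0, 0)"

definition slice_potential :: "real \<Rightarrow> real \<Rightarrow> real \<Rightarrow> real \<Rightarrow> real" where
  "slice_potential \<tau> y s \<phi> = y * energy (cone_point \<tau> y s \<phi>) - tube_flux (cone_point \<tau> y s \<phi>)"

definition slice_potential_deriv :: "real \<Rightarrow> real \<Rightarrow> real \<Rightarrow> real \<Rightarrow> real" where
  "slice_potential_deriv \<tau> y s \<phi> = energy (cone_point \<tau> y s \<phi>)
     + y * energy_deriv (cone_point \<tau> y s \<phi>) (- \<tau>, \<tau>, 0, 0) - tube_flux_deriv (cone_point \<tau> y s \<phi>) (- \<tau>, \<tau>, 0, 0)"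

lemma cone_density_deriv_decomposition:
  "cone_density_deriv \<tau> y s \<phi> = slice_potential_deriv \<tau> y s \<phi> + 2 * \<tau> * energy_current_div (cone_point \<tau> y s \<phi>)"
  unfolding cone_density_deriv_def slice_potential_deriv_def energy_deriv_def tube_flux_deriv_def
    energy_current_div_def blinfun_apply_u_r_direction
  by (simp add: algebra_simps)

lemma has_real_derivative_cone_density:
  assumes "\<tau> \<in> {0..T}" "y \<in> {0..1}" "s \<in> {-1..1}"
  shows "((\<lambda>\<tau>. cone_density \<tau> y s \<phi>) has_real_derivative cone_density_deriv \<tau> y s \<phi>) (at \<tau> within {0..T})"
proof -
  have "((\<lambda>\<tau>. energy (cone_point \<tau> y s \<phi>)) has_real_derivative
      energy_deriv (cone_point \<tau> y s \<phi>) (1 - y, y, 0, 0)) (at \<tau> within {0..T})"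
    using assms by (intro has_real_derivative_energy cone_point_in_D_T cone_point_vector_derivative_tau) auto
  from DERIV_mult[OF DERIV_ident this] show ?thesis
    unfolding cone_density_def cone_density_deriv_def by (simp add: mult.commute)
qed

lemma has_real_derivative_slice_potential:
  assumes "\<tau> \<in> {0..T}" "y \<in> {0..1}" "s \<in> {-1..1}"
  shows "((\<lambda>y. slice_potential \<tau> y s \<phi>) has_real_derivative slice_potential_deriv \<tau> y s \<phi>) (at y within {0..1})"
proof -
  have in_D: "\<And>y. y \<in> {0..1} \<Longrightarrow> cone_point \<tau> y s \<phi> \<in> D_T r0 T"
    using assms by (simp add: cone_point_in_D_T)
  show ?thesis
    unfolding slice_potential_def slice_potential_deriv_def
    using has_real_derivative_energy[OF in_D cone_point_vector_derivative_y assms(2)]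
      has_real_derivative_tube_flux[OF in_D cone_point_vector_derivative_y assms(2)]
    by (auto intro!: derivative_eq_intros)
qed

lemma continuous_on_cone_density_deriv:
  "continuous_on ({0..T} \<times> cone_box) (\<lambda>(\<tau>, y, s, \<phi>). cone_density_deriv \<tau> y s \<phi>)"
  unfolding cone_density_deriv_def energy_def energy_deriv_def blinfun_apply_u_r_direction split_beta
  by (intro continuous_intros) (auto simp: cone_box_eq intro!: cone_point_in_D_T)

lemma continuous_on_slice_potential_deriv:
  "\<tau> \<in> {0..T} \<Longrightarrow> continuous_on cone_box (\<lambda>(y, s, \<phi>). slice_potential_deriv \<tau> y s \<phi>)"
  unfolding slice_potential_deriv_def energy_def energy_deriv_def tube_flux_deriv_def
    blinfun_apply_u_r_direction split_beta
  by (intro continuous_intros) (auto simp: cone_box_eq intro!: cone_point_in_D_T)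

lemma continuous_on_energy_current_div_cone:
  "\<tau> \<in> {0..T} \<Longrightarrow> continuous_on cone_box (\<lambda>(y, s, \<phi>). energy_current_div (cone_point \<tau> y s \<phi>))"
  unfolding energy_current_div_def split_beta
  by (intro continuous_intros) (auto simp: cone_box_eq intro!: cone_point_in_D_T)

definition cone_energy :: "real \<Rightarrow> real" where
  "cone_energy \<tau> = integral cone_box (\<lambda>(y, s, \<phi>). cone_density \<tau> y s \<phi>)"

definition initial_sphere_integral :: "real \<Rightarrow> real" where
  "initial_sphere_integral x = integral angle_box (\<lambda>(s, \<phi>). (R (0, r0 + x, s, \<phi>))\<^sup>2)"

definition tube_sphere_integral :: "real \<Rightarrow> real" where
  "tube_sphere_integral u = integral angle_box (\<lambda>(s, \<phi>). tube_flux (u, r0, s, \<phi>))"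

lemma cone_energy_has_derivative:
  assumes "\<tau> \<in> {0..T}"
  shows "(cone_energy has_real_derivative integral cone_box (\<lambda>(y, s, \<phi>). cone_density_deriv \<tau> y s \<phi>))
    (at \<tau> within {0..T})"
proof -
  have "(\<lambda>(y, s, \<phi>). cone_density x y s \<phi>) integrable_on cone_box" if "x \<in> {0..T}" for x
    using that unfolding cone_density_def energy_def split_beta
    by (intro integrable_continuous continuous_intros) (auto simp: cone_box_eq intro!: cone_point_in_D_T)
  then show ?thesis
    unfolding cone_energy_def[abs_def] using assms continuous_on_cone_density_deriv
    by (intro leibniz_rule_field_derivative) (auto simp: cone_box_eq intro!: has_real_derivative_cone_density)
qed

lemma integral_slice_potential_deriv:
  assumes "\<tau> \<in> {0..T}" "s \<in> {-1..1}"
  shows "integral {0..1} (\<lambda>y. slice_potential_deriv \<tau> y s \<phi>) = 2 * (R (0, r0 + \<tau>, s, \<phi>))\<^sup>2 + tube_flux (\<tau>, r0, s, \<phi>)"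
proof -
  have "((\<lambda>y. slice_potential_deriv \<tau> y s \<phi>) has_integral slice_potential \<tau> 1 s \<phi> - slice_potential \<tau> 0 s \<phi>) {0..1}"
    using assms has_real_derivative_slice_potential
    by (intro fundamental_theorem_of_calculus) (auto simp: has_real_derivative_iff_has_vector_derivative[symmetric])
  moreover have "slice_potential \<tau> 1 s \<phi> - slice_potential \<tau> 0 s \<phi> = 2 * (R (0, r0 + \<tau>, s, \<phi>))\<^sup>2 + tube_flux (\<tau>, r0, s, \<phi>)"
    by (simp add: slice_potential_def cone_point_def energy_def tube_flux_def)
  ultimately show ?thesis
    by (simp add: integral_unique)
qed

lemma integral_cone_box_slice_potential_deriv:
  assumes "\<tau> \<in> {0..T}"
  shows "integral cone_box (\<lambda>(y, s, \<phi>). slice_potential_deriv \<tau> y s \<phi>)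
    = 2 * initial_sphere_integral \<tau> + tube_sphere_integral \<tau>"
proof -
  define f where "f y = (\<lambda>(s, \<phi>). slice_potential_deriv \<tau> y s \<phi>)" for y
  have cont: "continuous_on (cbox (0, -1, 0) (1, 1, 2 * pi)) (\<lambda>(y, t). f y t)"
    using continuous_on_slice_potential_deriv[OF assms] by (simp add: f_def case_prod_unfold)
  have "integral cone_box (\<lambda>(y, t). f y t) = integral (cbox 0 1) (\<lambda>y. integral angle_box (f y))"
    using integral_prod_continuous[OF cont] by simp
  also have "\<dots> = integral angle_box (\<lambda>t. integral (cbox 0 1) (\<lambda>y. f y t))"
    using cont by (rule integral_swap_continuous)
  also have "\<dots> = integral angle_box (\<lambda>(s, \<phi>). 2 * (R (0, r0 + \<tau>, s, \<phi>))\<^sup>2 + tube_flux (\<tau>, r0, s, \<phi>))"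
    using assms by (intro integral_cong) (auto simp: f_def angle_box_eq cbox_interval integral_slice_potential_deriv)
  also have "\<dots> = 2 * initial_sphere_integral \<tau> + tube_sphere_integral \<tau>"
  proof -
    have "continuous_on angle_box (\<lambda>(s, \<phi>). (R (0, r0 + \<tau>, s, \<phi>))\<^sup>2)"
      "continuous_on angle_box (\<lambda>(s, \<phi>). tube_flux (\<tau>, r0, s, \<phi>))"
      using assms unfolding tube_flux_def split_beta by (auto simp: angle_box_eq intro!: continuous_intros)
    then show ?thesis
      unfolding initial_sphere_integral_def tube_sphere_integral_def split_beta
      by (subst integral_add) (auto intro!: integrable_continuous continuous_intros)
  qed
  finally show ?thesis
    by (simp add: f_def case_prod_unfold)
qed

lemma integral_cone_box_cone_density_deriv:
  assumes "\<tau> \<in> {0..T}"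
  shows "integral cone_box (\<lambda>(y, s, \<phi>). cone_density_deriv \<tau> y s \<phi>)
    = 2 * initial_sphere_integral \<tau> + tube_sphere_integral \<tau>
      + 2 * \<tau> * integral cone_box (\<lambda>(y, s, \<phi>). energy_current_div (cone_point \<tau> y s \<phi>))"
  using continuous_on_slice_potential_deriv[OF assms] continuous_on_energy_current_div_cone[OF assms]
    integral_cone_box_slice_potential_deriv[OF assms]
  unfolding cone_density_deriv_decomposition case_prod_unfold
  by (subst integral_add) (auto intro!: integrable_continuous continuous_intros)

lemma continuous_on_initial_sphere_integral: "continuous_on {0..T} initial_sphere_integral"
  unfolding initial_sphere_integral_def[abs_def]
  by (intro integral_continuous_on_param) (auto simp: split_beta angle_box_eq intro!: continuous_intros)

lemma continuous_on_tube_sphere_integral: "continuous_on {0..T} tube_sphere_integral"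
  unfolding tube_sphere_integral_def[abs_def] tube_flux_def
  by (intro integral_continuous_on_param) (auto simp: split_beta angle_box_eq intro!: continuous_intros)

lemma cone_energy_balance_has_derivative:
  assumes "\<tau> \<in> {0..T}"
  shows "((\<lambda>\<tau>. cone_energy \<tau> - 2 * integral {0..\<tau>} initial_sphere_integral - integral {0..\<tau>} tube_sphere_integral)
      has_real_derivative 2 * \<tau> * integral cone_box (\<lambda>(y, s, \<phi>). energy_current_div (cone_point \<tau> y s \<phi>)))
    (at \<tau> within {0..T})"
  using cone_energy_has_derivative[OF assms] integral_cone_box_cone_density_deriv[OF assms]
    integral_has_real_derivative[OF continuous_on_initial_sphere_integral assms]
    integral_has_real_derivative[OF continuous_on_tube_sphere_integral assms]
  by (auto intro!: derivative_eq_intros)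

lemma cone_energy_eq_integral:
  assumes "0 \<le> T"
  shows "cone_energy T = integral (cbox (r0, -1, 0) (T + r0, 1, 2 * pi))
    (\<lambda>(r, s, \<phi>). (R (T + r0 - r, r, s, \<phi>))\<^sup>2 + (P (T + r0 - r, r, s, \<phi>))\<^sup>2 + (Q (T + r0 - r, r, s, \<phi>))\<^sup>2)"
proof -
  define h where "h r = integral angle_box (\<lambda>(s, \<phi>). energy (T + r0 - r, r, s, \<phi>))" for r
  have cont: "continuous_on ({r0..T + r0} \<times> angle_box) (\<lambda>(r, s, \<phi>). energy (T + r0 - r, r, s, \<phi>))"
    unfolding energy_def split_beta by (auto simp: angle_box_eq intro!: continuous_intros)
  have "cone_energy T = integral {0..1} (\<lambda>y. integral angle_box (\<lambda>(s, \<phi>). cone_density T y s \<phi>))"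
    unfolding cone_energy_def using assms
    by (intro integral_cbox_Pair_continuous)
      (auto simp: cone_density_def energy_def split_beta angle_box_eq intro!: continuous_intros cone_point_in_D_T)
  also have "\<dots> = integral {0..1} (\<lambda>y. T *\<^sub>R h (r0 + T * y))"
    by (simp add: h_def cone_density_def cone_point_def case_prod_unfold algebra_simps)
  also have "\<dots> = integral {r0 + T * 0..r0 + T * 1} h"
  proof (rule integral_unique, rule has_integral_substitution)
    show "continuous_on {r0..T + r0} h"
      unfolding h_def[abs_def] using cont by (rule integral_continuous_on_param)
  qed (use assms in \<open>auto intro!: derivative_eq_intros mult_left_le\<close>)
  also have "\<dots> = integral (cbox (r0, -1, 0) (T + r0, 1, 2 * pi)) (\<lambda>(r, s, \<phi>). energy (T + r0 - r, r, s, \<phi>))"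
    by (subst integral_cbox_Pair_continuous[OF cont]) (simp add: h_def[abs_def] add.commute)
  finally show ?thesis
    by (simp add: energy_def)
qed

lemma integral_initial_sphere_integral:
  "integral {0..T} initial_sphere_integral =
    integral (cbox (r0, -1, 0) (T + r0, 1, 2 * pi)) (\<lambda>(r, s, \<phi>). (R (0, r, s, \<phi>))\<^sup>2)"
proof -
  have "integral {0..T} initial_sphere_integral = integral {r0..T + r0} (\<lambda>r. initial_sphere_integral (r - r0))"
    using integral_shift_real_ivl[where f = "\<lambda>r. initial_sphere_integral (r - r0)" and a = r0 and b = "T + r0" and c = r0]
    by simp
  also have "\<dots> = integral (cbox (r0, -1, 0) (T + r0, 1, 2 * pi)) (\<lambda>(r, s, \<phi>). (R (0, r, s, \<phi>))\<^sup>2)"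
    by (subst integral_cbox_Pair_continuous)
      (auto simp: initial_sphere_integral_def split_beta angle_box_eq intro!: continuous_intros)
  finally show ?thesis .
qed

lemma integral_tube_sphere_integral_le:
  "integral {0..T} tube_sphere_integral \<le>
    integral (cbox (0, -1, 0) (T, 1, 2 * pi)) (\<lambda>(u, s, \<phi>). (P (u, r0, s, \<phi>))\<^sup>2 + (Q (u, r0, s, \<phi>))\<^sup>2)"
proof -
  have cont: "continuous_on ({0..T} \<times> angle_box) (\<lambda>(u, s, \<phi>). (P (u, r0, s, \<phi>))\<^sup>2 + (Q (u, r0, s, \<phi>))\<^sup>2)"
    unfolding split_beta by (auto simp: angle_box_eq intro!: continuous_intros)
  have "integral {0..T} tube_sphere_integral \<le>
      integral {0..T} (\<lambda>u. integral angle_box (\<lambda>(s, \<phi>). (P (u, r0, s, \<phi>))\<^sup>2 + (Q (u, r0, s, \<phi>))\<^sup>2))"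
  proof (rule integral_le)
    show "tube_sphere_integral integrable_on {0..T}"
      using continuous_on_tube_sphere_integral by (rule integrable_continuous_real)
    show "(\<lambda>u. integral angle_box (\<lambda>(s, \<phi>). (P (u, r0, s, \<phi>))\<^sup>2 + (Q (u, r0, s, \<phi>))\<^sup>2)) integrable_on {0..T}"
      using integral_continuous_on_param[OF cont] by (rule integrable_continuous_real)
  next
    fix u assume "u \<in> {0..T}"
    then show "tube_sphere_integral u \<le> integral angle_box (\<lambda>(s, \<phi>). (P (u, r0, s, \<phi>))\<^sup>2 + (Q (u, r0, s, \<phi>))\<^sup>2)"
      unfolding tube_sphere_integral_def tube_flux_def case_prod_unfold
      by (intro integral_le integrable_continuous) (auto simp: angle_box_eq intro!: continuous_intros)
  qed
  also have "\<dots> = integral (cbox (0, -1, 0) (T, 1, 2 * pi)) (\<lambda>(u, s, \<phi>). (P (u, r0, s, \<phi>))\<^sup>2 + (Q (u, r0, s, \<phi>))\<^sup>2)"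
    using integral_cbox_Pair_continuous[OF cont] by (simp only:)
  finally show ?thesis .
qed

lemma integral_tube_data_nonneg:
  "0 \<le> integral (cbox (0, -1, 0) (T, 1, 2 * pi)) (\<lambda>(u, s, \<phi>). (P (u, r0, s, \<phi>))\<^sup>2 + (Q (u, r0, s, \<phi>))\<^sup>2)"
proof -
  have "continuous_on (cbox (0, -1, 0) (T, 1, 2 * pi)) (\<lambda>(u, s, \<phi>). (P (u, r0, s, \<phi>))\<^sup>2 + (Q (u, r0, s, \<phi>))\<^sup>2)"
    unfolding cbox_Pair_eq split_beta by (auto simp: cbox_interval intro!: continuous_intros)
  then show ?thesis
    by (intro integral_nonneg integrable_continuous) auto
qed

end

locale characteristic_system = C1_fields +
  assumes r0_pos: "r0 > 0"
    and perR: "\<And>u r s \<phi>. (u, r, s, \<phi>) \<in> D_T r0 T \<Longrightarrow> R (u, r, s, \<phi> + 2 * pi) = R (u, r, s, \<phi>)"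
    and perQ: "\<And>u r s \<phi>. (u, r, s, \<phi>) \<in> D_T r0 T \<Longrightarrow> Q (u, r, s, \<phi> + 2 * pi) = Q (u, r, s, \<phi>)"
    and eq1: "\<And>u r s \<phi>. (u, r, s, \<phi>) \<in> D_T r0 T \<Longrightarrow> \<bar>s\<bar> < 1 \<Longrightarrow>
      2 * d_u (R' (u, r, s, \<phi>)) =
        d_r (R' (u, r, s, \<phi>)) + sqrt (1 - s\<^sup>2) / r * d_s (P' (u, r, s, \<phi>))
        + 1 / (r * sqrt (1 - s\<^sup>2)) * d_phi (Q' (u, r, s, \<phi>))
        - s * P (u, r, s, \<phi>) / (r * sqrt (1 - s\<^sup>2))"
    and eq2: "\<And>u r s \<phi>. (u, r, s, \<phi>) \<in> D_T r0 T \<Longrightarrow> \<bar>s\<bar> < 1 \<Longrightarrow>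
      d_r (P' (u, r, s, \<phi>)) = sqrt (1 - s\<^sup>2) / r * d_s (R' (u, r, s, \<phi>)) - P (u, r, s, \<phi>) / r"
    and eq3: "\<And>u r s \<phi>. (u, r, s, \<phi>) \<in> D_T r0 T \<Longrightarrow> \<bar>s\<bar> < 1 \<Longrightarrow>
      d_r (Q' (u, r, s, \<phi>)) = 1 / (r * sqrt (1 - s\<^sup>2)) * d_phi (R' (u, r, s, \<phi>)) - Q (u, r, s, \<phi>) / r"
begin

lemma energy_current_div_eq:
  assumes q: "q = (u, r, s, \<phi>)" and "q \<in> D_T r0 T" "\<bar>s\<bar> < 1"
  shows "r * energy_current_div q + ((P q)\<^sup>2 + (Q q)\<^sup>2) =
    sqrt (1 - s\<^sup>2) * (d_s (R' q) * P q + R q * d_s (P' q)) - s / sqrt (1 - s\<^sup>2) * (R q * P q)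
    + (d_phi (R' q) * Q q + R q * d_phi (Q' q)) / sqrt (1 - s\<^sup>2)"
proof -
  define w where "w = sqrt (1 - s\<^sup>2)"
  have "r > 0"
    using assms r0_pos by simp
  have R_u: "r * (2 * d_u (R' q)) = r * d_r (R' q) + w * d_s (P' q) + d_phi (Q' q) / w - s * P q / w"
    using eq1[OF assms(2,3)[unfolded q]] \<open>r > 0\<close> by (simp add: q w_def field_simps)
  have P_r: "r * d_r (P' q) = w * d_s (R' q) - P q"
    using eq2[OF assms(2,3)[unfolded q]] \<open>r > 0\<close> by (simp add: q w_def field_simps)
  have Q_r: "r * d_r (Q' q) = d_phi (R' q) / w - Q q"
    using eq3[OF assms(2,3)[unfolded q]] \<open>r > 0\<close> by (simp add: q w_def field_simps)
  have "r * energy_current_div q = R q * (r * (2 * d_u (R' q)) - r * d_r (R' q))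
      + P q * (r * d_r (P' q)) + Q q * (r * d_r (Q' q))"
    by (simp add: energy_current_div_def algebra_simps)
  also have "\<dots> = R q * (w * d_s (P' q) + d_phi (Q' q) / w - s * P q / w)
      + P q * (w * d_s (R' q) - P q) + Q q * (d_phi (R' q) / w - Q q)"
    unfolding R_u P_r Q_r by simp
  finally have "r * energy_current_div q + ((P q)\<^sup>2 + (Q q)\<^sup>2) =
      w * (d_s (R' q) * P q + R q * d_s (P' q)) - s / w * (R q * P q) + (d_phi (R' q) * Q q + R q * d_phi (Q' q)) / w"
    by (simp add: algebra_simps add_divide_distrib diff_divide_distrib power2_eq_square)
  then show ?thesis
    unfolding w_def .
qed

lemma sphere_integral_energy_identity:
  assumes "0 \<le> u" "r0 \<le> r" "u + r \<le> T + r0"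
  shows "integral angle_box (\<lambda>(s, \<phi>). r * energy_current_div (u, r, s, \<phi>)
      + ((P (u, r, s, \<phi>))\<^sup>2 + (Q (u, r, s, \<phi>))\<^sup>2)) = 0"
proof (rule integral_spherical_divergence[where
      a = "\<lambda>s \<phi>. R (u, r, s, \<phi>) * P (u, r, s, \<phi>)" and
      a_s = "\<lambda>s \<phi>. d_s (R' (u, r, s, \<phi>)) * P (u, r, s, \<phi>) + R (u, r, s, \<phi>) * d_s (P' (u, r, s, \<phi>))" and
      b = "\<lambda>s \<phi>. R (u, r, s, \<phi>) * Q (u, r, s, \<phi>)" and
      b_\<phi> = "\<lambda>s \<phi>. d_phi (R' (u, r, s, \<phi>)) * Q (u, r, s, \<phi>) + R (u, r, s, \<phi>) * d_phi (Q' (u, r, s, \<phi>))"])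
  show "continuous_on angle_box (\<lambda>(s, \<phi>). R (u, r, s, \<phi>) * P (u, r, s, \<phi>))"
    "continuous_on angle_box (\<lambda>(s, \<phi>).
       d_s (R' (u, r, s, \<phi>)) * P (u, r, s, \<phi>) + R (u, r, s, \<phi>) * d_s (P' (u, r, s, \<phi>)))"
    "continuous_on angle_box (\<lambda>(s, \<phi>). r * energy_current_div (u, r, s, \<phi>)
       + ((P (u, r, s, \<phi>))\<^sup>2 + (Q (u, r, s, \<phi>))\<^sup>2))"
    using assms unfolding energy_current_div_def split_beta
    by (auto simp: angle_box_eq intro!: continuous_intros)
qed (use assms perR[of u r _ 0, simplified] perQ[of u r _ 0, simplified] energy_current_div_eq[OF refl] in
      \<open>auto simp: abs_less_iff intro!: has_real_derivative_C1_with_product_s_line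
         has_real_derivative_C1_with_product_phi_line C1R C1P C1Q\<close>)

lemma sphere_integral_energy_current_div_nonpos:
  assumes "0 \<le> u" "r0 \<le> r" "u + r \<le> T + r0"
  shows "integral angle_box (\<lambda>(s, \<phi>). energy_current_div (u, r, s, \<phi>)) \<le> 0"
proof -
  have "r > 0"
    using assms r0_pos by simp
  have cont_div: "continuous_on angle_box (\<lambda>(s, \<phi>). energy_current_div (u, r, s, \<phi>))"
    using assms unfolding energy_current_div_def split_beta by (auto simp: angle_box_eq intro!: continuous_intros)
  have cont_PQ: "continuous_on angle_box (\<lambda>(s, \<phi>). (P (u, r, s, \<phi>))\<^sup>2 + (Q (u, r, s, \<phi>))\<^sup>2)"
    using assms unfolding split_beta by (auto simp: angle_box_eq intro!: continuous_intros)
  have "r * integral angle_box (\<lambda>(s, \<phi>). energy_current_div (u, r, s, \<phi>))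
      + integral angle_box (\<lambda>(s, \<phi>). (P (u, r, s, \<phi>))\<^sup>2 + (Q (u, r, s, \<phi>))\<^sup>2) = 0"
    using sphere_integral_energy_identity[OF assms] cont_div cont_PQ unfolding case_prod_unfold
    by (subst (asm) integral_add) (auto intro!: integrable_continuous continuous_intros)
  moreover have "0 \<le> integral angle_box (\<lambda>(s, \<phi>). (P (u, r, s, \<phi>))\<^sup>2 + (Q (u, r, s, \<phi>))\<^sup>2)"
    using cont_PQ by (intro integral_nonneg integrable_continuous) auto
  ultimately show ?thesis
    using \<open>r > 0\<close> by (smt (verit) zero_less_mult_iff)
qed

lemma cone_integral_energy_current_div_nonpos:
  assumes "\<tau> \<in> {0..T}"
  shows "integral cone_box (\<lambda>(y, s, \<phi>). energy_current_div (cone_point \<tau> y s \<phi>)) \<le> 0"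
proof -
  have cont: "continuous_on ({0..1} \<times> angle_box) (\<lambda>(y, s, \<phi>). energy_current_div (cone_point \<tau> y s \<phi>))"
    using continuous_on_energy_current_div_cone[OF assms] by (simp add: cone_box_eq angle_box_eq)
  have "integral cone_box (\<lambda>(y, s, \<phi>). energy_current_div (cone_point \<tau> y s \<phi>)) =
      integral {0..1} (\<lambda>y. integral angle_box (\<lambda>(s, \<phi>). energy_current_div (cone_point \<tau> y s \<phi>)))"
    by (rule integral_cbox_Pair_continuous[OF cont])
  also have "\<dots> \<le> integral {0..1} (\<lambda>y::real. 0)"
  proof (rule integral_le)
    show "(\<lambda>y. integral angle_box (\<lambda>(s, \<phi>). energy_current_div (cone_point \<tau> y s \<phi>))) integrable_on {0..1}"
      using integral_continuous_on_param[OF cont] by (rule integrable_continuous_real)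
  next
    fix y :: real assume "y \<in> {0..1}"
    then have "0 \<le> \<tau> * (1 - y)" "r0 \<le> r0 + \<tau> * y" "\<tau> * (1 - y) + (r0 + \<tau> * y) \<le> T + r0"
      using assms mult_left_le[of y \<tau>] by (auto simp: algebra_simps)
    then show "integral angle_box (\<lambda>(s, \<phi>). energy_current_div (cone_point \<tau> y s \<phi>)) \<le> 0"
      unfolding cone_point_def by (rule sphere_integral_energy_current_div_nonpos)
  qed (rule integrable_0)
  finally show ?thesis
    by simp
qed

lemma cone_energy_le:
  assumes "0 \<le> T"
  shows "cone_energy T \<le> 2 * integral {0..T} initial_sphere_integral + integral {0..T} tube_sphere_integral"
proof -
  define F where "F \<tau> = cone_energy \<tau> - 2 * integral {0..\<tau>} initial_sphere_integral
    - integral {0..\<tau>} tube_sphere_integral" for \<tau>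
  have F_deriv: "(F has_real_derivative 2 * \<tau> * integral cone_box (\<lambda>(y, s, \<phi>).
      energy_current_div (cone_point \<tau> y s \<phi>))) (at \<tau> within {0..T})" if "\<tau> \<in> {0..T}" for \<tau>
    unfolding F_def[abs_def] using that by (rule cone_energy_balance_has_derivative)
  have "F T \<le> F 0"
  proof (rule DERIV_nonpos_imp_decreasing_open[OF assms])
    fix x assume "0 < x" "x < T"
    then show "\<exists>y. DERIV F x :> y \<and> y \<le> 0"
      using F_deriv[of x] cone_integral_energy_current_div_nonpos[of x]
      by (auto simp: at_within_Icc_at intro!: mult_nonneg_nonpos)
  next
    show "continuous_on {0..T} F"
      using F_deriv by (meson DERIV_continuous continuous_on_eq_continuous_within)
  qed
  moreover have "F 0 = 0"
    by (simp add: F_def cone_energy_def cone_density_def case_prod_unfold)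
  ultimately show ?thesis
    by (simp add: F_def)
qed

end

theorem theorem2:
  fixes r0 T :: real
    and R P Q :: "pt4 \<Rightarrow> real"
    and R' P' Q' :: "pt4 \<Rightarrow> (pt4 \<Rightarrow>\<^sub>L real)"
  assumes r0_pos: "r0 > 0" and T_pos: "T > 0"
    and C1R: "C1_with (D_T r0 T) R R'"
    and C1P: "C1_with (D_T r0 T) P P'"
    and C1Q: "C1_with (D_T r0 T) Q Q'"
    and perR: "\<And>u r s \<phi>. (u, r, s, \<phi>) \<in> D_T r0 T \<Longrightarrow> R (u, r, s, \<phi> + 2 * pi) = R (u, r, s, \<phi>)"
    and perP: "\<And>u r s \<phi>. (u, r, s, \<phi>) \<in> D_T r0 T \<Longrightarrow> P (u, r, s, \<phi> + 2 * pi) = P (u, r, s, \<phi>)"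
    and perQ: "\<And>u r s \<phi>. (u, r, s, \<phi>) \<in> D_T r0 T \<Longrightarrow> Q (u, r, s, \<phi> + 2 * pi) = Q (u, r, s, \<phi>)"
    and eq1: "\<And>u r s \<phi>. (u, r, s, \<phi>) \<in> D_T r0 T \<Longrightarrow> \<bar>s\<bar> < 1 \<Longrightarrow>
      2 * d_u (R' (u, r, s, \<phi>)) =
        d_r (R' (u, r, s, \<phi>)) + sqrt (1 - s\<^sup>2) / r * d_s (P' (u, r, s, \<phi>))
        + 1 / (r * sqrt (1 - s\<^sup>2)) * d_phi (Q' (u, r, s, \<phi>))
        - s * P (u, r, s, \<phi>) / (r * sqrt (1 - s\<^sup>2))"
    and eq2: "\<And>u r s \<phi>. (u, r, s, \<phi>) \<in> D_T r0 T \<Longrightarrow> \<bar>s\<bar> < 1 \<Longrightarrow>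
      d_r (P' (u, r, s, \<phi>)) = sqrt (1 - s\<^sup>2) / r * d_s (R' (u, r, s, \<phi>)) - P (u, r, s, \<phi>) / r"
    and eq3: "\<And>u r s \<phi>. (u, r, s, \<phi>) \<in> D_T r0 T \<Longrightarrow> \<bar>s\<bar> < 1 \<Longrightarrow>
      d_r (Q' (u, r, s, \<phi>)) = 1 / (r * sqrt (1 - s\<^sup>2)) * d_phi (R' (u, r, s, \<phi>)) - Q (u, r, s, \<phi>) / r"
  shows "integral (cbox (r0, -1, 0) (T + r0, 1, 2 * pi))
           (\<lambda>(r, s, \<phi>). (R (T + r0 - r, r, s, \<phi>))\<^sup>2 + (P (T + r0 - r, r, s, \<phi>))\<^sup>2
                          + (Q (T + r0 - r, r, s, \<phi>))\<^sup>2)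
         \<le> 2 * (integral (cbox (r0, -1, 0) (T + r0, 1, 2 * pi))
                    (\<lambda>(r, s, \<phi>). (R (0, r, s, \<phi>))\<^sup>2)
                + integral (cbox (0, -1, 0) (T, 1, 2 * pi))
                    (\<lambda>(u, s, \<phi>). (P (u, r0, s, \<phi>))\<^sup>2 + (Q (u, r0, s, \<phi>))\<^sup>2))"
proof -
  interpret characteristic_system r0 T R P Q R' P' Q'
    by unfold_locales (fact C1R C1P C1Q r0_pos perR perQ eq1 eq2 eq3)+
  have "0 \<le> T"
    using T_pos by simp
  then have "integral (cbox (r0, -1, 0) (T + r0, 1, 2 * pi))
      (\<lambda>(r, s, \<phi>). (R (T + r0 - r, r, s, \<phi>))\<^sup>2 + (P (T + r0 - r, r, s, \<phi>))\<^sup>2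
        + (Q (T + r0 - r, r, s, \<phi>))\<^sup>2) = cone_energy T"
    by (rule cone_energy_eq_integral[symmetric])
  also have "\<dots> \<le> 2 * integral {0..T} initial_sphere_integral + integral {0..T} tube_sphere_integral"
    using \<open>0 \<le> T\<close> by (rule cone_energy_le)
  also have "\<dots> \<le> 2 * (integral (cbox (r0, -1, 0) (T + r0, 1, 2 * pi)) (\<lambda>(r, s, \<phi>). (R (0, r, s, \<phi>))\<^sup>2)
      + integral (cbox (0, -1, 0) (T, 1, 2 * pi)) (\<lambda>(u, s, \<phi>). (P (u, r0, s, \<phi>))\<^sup>2 + (Q (u, r0, s, \<phi>))\<^sup>2))"
    using integral_tube_sphere_integral_le integral_tube_data_nonneg
    unfolding integral_initial_sphere_integral by argo
  finally show ?thesis .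
qed

end
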